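(* Consider the following birational transformations acting on $(q_1,p_1,q_2,p_2,t,s)$ and on parameters $(\alpha_1,\dots,\alpha_6)$ (constrained by $2\alpha_1+\alpha_2+\dots+\alpha_6=1$); each tuple lists images of $(q_1,p_1,q_2,p_2,t,s;\alpha_1,\dots,\alpha_6)$: $w_1$: $(q_1,p_1,q_2,p_2,t,s;\alpha_1+\alpha_2,-\alpha_2,\alpha_3,\alpha_4,\alpha_5,\alpha_6)$; $w_2$: $(q_1,p_1-\frac{\alpha_3}{q_1},q_2,p_2,t,s;\alpha_1+\alpha_3,\alpha_2,-\alpha_3,\alpha_4,\alpha_5,\alpha_6)$; $w_3$: $(q_1,p_1,q_2,p_2-\frac{\alpha_4}{q_2},t,s;\alpha_1+\alpha_4,\alpha_2,\alpha_3,-\alpha_4,\alpha_5,\alpha_6)$; $w_4$: $(q_1,p_1-\frac{\alpha_5}{q_1+q_2-1},q_2,p_2-\frac{\alpha_5}{q_1+q_2-1},t,s;\alpha_1+\alpha_5,\alpha_2,\alpha_3,\alpha_4,-\alpha_5,\alpha_6)$; $w_5$: $(q_1,p_1-\frac{\alpha_6}{q_1+tq_2/s-t},q_2,p_2-\frac{\alpha_6t}{s(q_1+tq_2/s-t)},t,s;\alpha_1+\alpha_6,\alpha_2,\alpha_3,\alpha_4,\alpha_5,-\alpha_6)$; $\pi_1$: with $A=q_1p_1+q_2p_2+\alpha_1$, $A'=A+\alpha_2$: $\big(\frac{p_1(q_1p_1-\alpha_3)}{AA'},-\frac{AA'}{p_1},\frac{p_2(q_2p_2-\alpha_4)}{AA'},-\frac{AA'}{p_2},\frac1t,\frac1s;-\alpha_1-\alpha_2-\alpha_3-\alpha_4,\alpha_2,\alpha_3,\alpha_4,1-\alpha_6,1-\alpha_5\big)$;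 $\pi_2$: $\big(1-q_1-q_2,-p_1,q_2,p_2-p_1,1-t,\frac{(t-1)s}{t-s};\alpha_1,\alpha_2,\alpha_5,\alpha_4,\alpha_3,\alpha_6\big)$; $\pi_3$: $\big(\frac{-sq_1-tq_2+ts}{(t-1)s},-(t-1)p_1,\frac{(t-s)q_2}{(t-1)s},-\frac{(t-1)(tp_1-sp_2)}{t-s},\frac{t}{t-1},\frac{t-s}{t-1};\alpha_1,\alpha_2,\alpha_6,\alpha_4,\alpha_5,\alpha_3\big)$; $\pi_4$: $\big(\frac{q_1}{t},tp_1,\frac{q_2}{s},sp_2,\frac1t,\frac1s;\alpha_1,\alpha_2,\alpha_3,\alpha_4,\alpha_6,\alpha_5\big)$; $\pi_5$: $\big(-\frac{q_1}{q_2},-p_1q_2,\frac1{q_2},-(q_2p_2+q_1p_1+\alpha_1)q_2,\frac{t}{s},\frac1s;\alpha_1,\alpha_4,\alpha_3,\alpha_2,\alpha_5,\alpha_6\big)$; $\pi_6$: $(q_2,p_2,q_1,p_1,s,t;\alpha_1,\alpha_2,\alpha_4,\alpha_3,\alpha_5,\alpha_6)$. Further, with $\gamma_0=1-\alpha_5-\alpha_6$, $\gamma_1=\alpha_6-\alpha_5$, $\gamma_2=\alpha_5-\alpha_2$, $\gamma_3=\alpha_2-\alpha_3$, $\gamma_4=\alpha_3-\alpha_4$, $\gamma_5=\alpha_4$ (so that $\alpha$'s are recovered from $\gamma$'s), define transformations $s_0,\dots,s_5$ (tuples list images of $(q_1,p_1,q_2,p_2,t,s;\gamma_0,\dots,\gamma_5)$),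 writing $E=2q_1p_1+2q_2p_2+\gamma_0-\gamma_3-2\gamma_4-3\gamma_5$, $F=2q_1p_1+2q_2p_2+\gamma_0+\gamma_3-\gamma_5$, $G=q_1p_1+q_2p_2+\frac{\gamma_0-\gamma_3-2\gamma_4-3\gamma_5}{2}$: $s_0$: $\big(\frac{4p_1(q_1p_1-\gamma_4-\gamma_5)}{EF},-\frac{EF}{4p_1},\frac{4p_2(q_2p_2-\gamma_5)}{EF},-\frac{EF}{4p_2},\frac1t,\frac1s;-\gamma_0,\gamma_1,\gamma_2+\gamma_0,\gamma_3,\gamma_4,\gamma_5\big)$; $s_1$: $\big(\frac{q_1}{t},tp_1,\frac{q_2}{s},sp_2,\frac1t,\frac1s;\gamma_0,-\gamma_1,\gamma_2+\gamma_1,\gamma_3,\gamma_4,\gamma_5\big)$; $s_2$: $\big(\frac{q_1}{q_1+q_2-1},(p_1-G)(q_1+q_2-1),\frac{q_2}{q_1+q_2-1},(p_2-G)(q_1+q_2-1),\frac{t}{t-1},\frac{s}{s-1};\gamma_0+\gamma_2,\gamma_1+\gamma_2,-\gamma_2,\gamma_3+\gamma_2,\gamma_4,\gamma_5\big)$; $s_3$: $\big(\frac1{q_1},-Gq_1,-\frac{q_2}{q_1},-q_1p_2,\frac1t,\frac{s}{t};\gamma_0,\gamma_1,\gamma_2+\gamma_3,-\gamma_3,\gamma_4+\gamma_3,\gamma_5\big)$; $s_4$: $(q_2,p_2,q_1,p_1,s,t;\gamma_0,\gamma_1,\gamma_2,\gamma_3+\gamma_4,-\gamma_4,\gamma_5+\gamma_4)$;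 $s_5$: $\big(q_1,p_1,q_2,p_2-\frac{\gamma_5}{q_2},t,s;\gamma_0,\gamma_1,\gamma_2,\gamma_3,\gamma_4+2\gamma_5,-\gamma_5\big)$. Then the group generated by $s_0,\dots,s_5$ (an affine Weyl group of type $B_5^{(1)}$) equals the group generated by $w_1,\dots,w_5,\pi_1,\dots,\pi_6$.
   Context: All these transformations are regarded as birational automorphisms of the space of variables $(q_1,p_1,q_2,p_2,t,s)$ together with parameters; the transformations $s_i$ are written in the parameters $\gamma_i$, which are linear functions of the $\alpha_i$ as given, and act on the $\alpha_i$ through this correspondence. Group equality means each generator of one family is a composition of generators of the other family. *)

theory Defs
  imports Complex_Main
begin

datatype pt = Pt complex complex complex complex complex complex
                 complex complex complex complex complex complex

definition coords :: "pt \<Rightarrow> complex list" where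
  "coords x = (case x of Pt q1 p1 q2 p2 t s a1 a2 a3 a4 a5 a6 \<Rightarrow>
      [q1, p1, q2, p2, t, s, a1, a2, a3, a4, a5, a6])"

definition onM :: "pt \<Rightarrow> bool" where
  "onM x = (case x of Pt q1 p1 q2 p2 t s a1 a2 a3 a4 a5 a6 \<Rightarrow>
      2*a1 + a2 + a3 + a4 + a5 + a6 = 1)"

inductive poly_fun :: "(pt \<Rightarrow> complex) \<Rightarrow> bool" where
  pf_const: "poly_fun (\<lambda>_. c)"
| pf_coord: "i < 12 \<Longrightarrow> poly_fun (\<lambda>x. coords x ! i)"
| pf_add: "poly_fun f \<Longrightarrow> poly_fun g \<Longrightarrow> poly_fun (\<lambda>x. f x + g x)"
| pf_mult: "poly_fun f \<Longrightarrow> poly_fun g \<Longrightarrow> poly_fun (\<lambda>x. f x * g x)"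

text \<open>Equality as rational (birational) maps on the parameter hyperplane:
  the two total functions agree outside the zero set of some polynomial
  that does not vanish identically on the hyperplane.\<close>
definition rat_eq :: "(pt \<Rightarrow> pt) \<Rightarrow> (pt \<Rightarrow> pt) \<Rightarrow> bool" where
  "rat_eq f g = (\<exists>P. poly_fun P \<and> (\<exists>x. onM x \<and> P x \<noteq> 0) \<and>
                    (\<forall>x. onM x \<and> P x \<noteq> 0 \<longrightarrow> f x = g x))"

definition comp_word :: "(pt \<Rightarrow> pt) list \<Rightarrow> pt \<Rightarrow> pt" where
  "comp_word ws = foldr (\<circ>) ws id"

definition gens_in :: "(pt \<Rightarrow> pt) list \<Rightarrow> (pt \<Rightarrow> pt) list \<Rightarrow> bool" where
  "gens_in G H = (\<forall>g \<in> set G. \<exists>ws. set ws \<subseteq> set H \<and> rat_eq g (comp_word ws))"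

definition w1 :: "pt \<Rightarrow> pt" where
  "w1 x = (case x of Pt q1 p1 q2 p2 t s a1 a2 a3 a4 a5 a6 \<Rightarrow>
     Pt q1 p1 q2 p2 t s (a1 + a2) (- a2) a3 a4 a5 a6)"

definition w2 :: "pt \<Rightarrow> pt" where
  "w2 x = (case x of Pt q1 p1 q2 p2 t s a1 a2 a3 a4 a5 a6 \<Rightarrow>
     Pt q1 (p1 - a3 / q1) q2 p2 t s (a1 + a3) a2 (- a3) a4 a5 a6)"

definition w3 :: "pt \<Rightarrow> pt" where
  "w3 x = (case x of Pt q1 p1 q2 p2 t s a1 a2 a3 a4 a5 a6 \<Rightarrow>
     Pt q1 p1 q2 (p2 - a4 / q2) t s (a1 + a4) a2 a3 (- a4) a5 a6)"

definition w4 :: "pt \<Rightarrow> pt" where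
  "w4 x = (case x of Pt q1 p1 q2 p2 t s a1 a2 a3 a4 a5 a6 \<Rightarrow>
     Pt q1 (p1 - a5 / (q1 + q2 - 1)) q2 (p2 - a5 / (q1 + q2 - 1)) t s
        (a1 + a5) a2 a3 a4 (- a5) a6)"

definition w5 :: "pt \<Rightarrow> pt" where
  "w5 x = (case x of Pt q1 p1 q2 p2 t s a1 a2 a3 a4 a5 a6 \<Rightarrow>
     Pt q1 (p1 - a6 / (q1 + t * q2 / s - t)) q2
        (p2 - a6 * t / (s * (q1 + t * q2 / s - t))) t s
        (a1 + a6) a2 a3 a4 a5 (- a6))"

definition pi1 :: "pt \<Rightarrow> pt" where
  "pi1 x = (case x of Pt q1 p1 q2 p2 t s a1 a2 a3 a4 a5 a6 \<Rightarrow>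
     let A = q1 * p1 + q2 * p2 + a1; A' = A + a2 in
     Pt (p1 * (q1 * p1 - a3) / (A * A')) (- (A * A') / p1)
        (p2 * (q2 * p2 - a4) / (A * A')) (- (A * A') / p2)
        (1 / t) (1 / s)
        (- a1 - a2 - a3 - a4) a2 a3 a4 (1 - a6) (1 - a5))"

definition pi2 :: "pt \<Rightarrow> pt" where
  "pi2 x = (case x of Pt q1 p1 q2 p2 t s a1 a2 a3 a4 a5 a6 \<Rightarrow>
     Pt (1 - q1 - q2) (- p1) q2 (p2 - p1) (1 - t) ((t - 1) * s / (t - s))
        a1 a2 a5 a4 a3 a6)"

definition pi3 :: "pt \<Rightarrow> pt" where
  "pi3 x = (case x of Pt q1 p1 q2 p2 t s a1 a2 a3 a4 a5 a6 \<Rightarrow>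
     Pt ((- s * q1 - t * q2 + t * s) / ((t - 1) * s)) (- (t - 1) * p1)
        ((t - s) * q2 / ((t - 1) * s)) (- (t - 1) * (t * p1 - s * p2) / (t - s))
        (t / (t - 1)) ((t - s) / (t - 1))
        a1 a2 a6 a4 a5 a3)"

definition pi4 :: "pt \<Rightarrow> pt" where
  "pi4 x = (case x of Pt q1 p1 q2 p2 t s a1 a2 a3 a4 a5 a6 \<Rightarrow>
     Pt (q1 / t) (t * p1) (q2 / s) (s * p2) (1 / t) (1 / s)
        a1 a2 a3 a4 a6 a5)"

definition pi5 :: "pt \<Rightarrow> pt" where
  "pi5 x = (case x of Pt q1 p1 q2 p2 t s a1 a2 a3 a4 a5 a6 \<Rightarrow>
     Pt (- q1 / q2) (- p1 * q2) (1 / q2) (- (q2 * p2 + q1 * p1 + a1) * q2)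
        (t / s) (1 / s)
        a1 a4 a3 a2 a5 a6)"

definition pi6 :: "pt \<Rightarrow> pt" where
  "pi6 x = (case x of Pt q1 p1 q2 p2 t s a1 a2 a3 a4 a5 a6 \<Rightarrow>
     Pt q2 p2 q1 p1 s t a1 a2 a4 a3 a5 a6)"

text \<open>Gamma parameters:
  g0 = 1 - a5 - a6, g1 = a6 - a5, g2 = a5 - a2, g3 = a2 - a3, g4 = a3 - a4, g5 = a4.
  Conversely a4 = g5, a3 = g4 + g5, a2 = g3 + a3, a5 = g2 + a2, a6 = g1 + a5,
  and a1 is recovered from the constraint 2 a1 + a2 + ... + a6 = 1
  (the new g0 is then determined consistently on the constraint hyperplane).\<close>
definition mkg :: "complex \<Rightarrow> complex \<Rightarrow> complex \<Rightarrow> complex \<Rightarrow> complex \<Rightarrow> complex \<Rightarrow>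
    complex \<Rightarrow> complex \<Rightarrow> complex \<Rightarrow> complex \<Rightarrow> complex \<Rightarrow> complex \<Rightarrow> pt" where
  "mkg q1 p1 q2 p2 t s g0 g1 g2 g3 g4 g5 =
     (let b4 = g5; b3 = g4 + b4; b2 = g3 + b3; b5 = g2 + b2; b6 = g1 + b5;
          b1 = (1 - b2 - b3 - b4 - b5 - b6) / 2
      in Pt q1 p1 q2 p2 t s b1 b2 b3 b4 b5 b6)"

definition s0 :: "pt \<Rightarrow> pt" where
  "s0 x = (case x of Pt q1 p1 q2 p2 t s a1 a2 a3 a4 a5 a6 \<Rightarrow>
     let g0 = 1 - a5 - a6; g1 = a6 - a5; g2 = a5 - a2; g3 = a2 - a3; g4 = a3 - a4; g5 = a4;
         E = 2 * q1 * p1 + 2 * q2 * p2 + g0 - g3 - 2 * g4 - 3 * g5;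
         F = 2 * q1 * p1 + 2 * q2 * p2 + g0 + g3 - g5
     in mkg (4 * p1 * (q1 * p1 - g4 - g5) / (E * F)) (- (E * F) / (4 * p1))
            (4 * p2 * (q2 * p2 - g5) / (E * F)) (- (E * F) / (4 * p2))
            (1 / t) (1 / s)
            (- g0) g1 (g2 + g0) g3 g4 g5)"

definition s1 :: "pt \<Rightarrow> pt" where
  "s1 x = (case x of Pt q1 p1 q2 p2 t s a1 a2 a3 a4 a5 a6 \<Rightarrow>
     let g0 = 1 - a5 - a6; g1 = a6 - a5; g2 = a5 - a2; g3 = a2 - a3; g4 = a3 - a4; g5 = a4
     in mkg (q1 / t) (t * p1) (q2 / s) (s * p2) (1 / t) (1 / s)
            g0 (- g1) (g2 + g1) g3 g4 g5)"

definition s2 :: "pt \<Rightarrow> pt" where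
  "s2 x = (case x of Pt q1 p1 q2 p2 t s a1 a2 a3 a4 a5 a6 \<Rightarrow>
     let g0 = 1 - a5 - a6; g1 = a6 - a5; g2 = a5 - a2; g3 = a2 - a3; g4 = a3 - a4; g5 = a4;
         G = q1 * p1 + q2 * p2 + (g0 - g3 - 2 * g4 - 3 * g5) / 2
     in mkg (q1 / (q1 + q2 - 1)) ((p1 - G) * (q1 + q2 - 1))
            (q2 / (q1 + q2 - 1)) ((p2 - G) * (q1 + q2 - 1))
            (t / (t - 1)) (s / (s - 1))
            (g0 + g2) (g1 + g2) (- g2) (g3 + g2) g4 g5)"

definition s3 :: "pt \<Rightarrow> pt" where
  "s3 x = (case x of Pt q1 p1 q2 p2 t s a1 a2 a3 a4 a5 a6 \<Rightarrow>
     let g0 = 1 - a5 - a6; g1 = a6 - a5; g2 = a5 - a2; g3 = a2 - a3; g4 = a3 - a4; g5 = a4;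
         G = q1 * p1 + q2 * p2 + (g0 - g3 - 2 * g4 - 3 * g5) / 2
     in mkg (1 / q1) (- G * q1) (- q2 / q1) (- q1 * p2) (1 / t) (s / t)
            g0 g1 (g2 + g3) (- g3) (g4 + g3) g5)"

definition s4 :: "pt \<Rightarrow> pt" where
  "s4 x = (case x of Pt q1 p1 q2 p2 t s a1 a2 a3 a4 a5 a6 \<Rightarrow>
     let g0 = 1 - a5 - a6; g1 = a6 - a5; g2 = a5 - a2; g3 = a2 - a3; g4 = a3 - a4; g5 = a4
     in mkg q2 p2 q1 p1 s t
            g0 g1 g2 (g3 + g4) (- g4) (g5 + g4))"

definition s5 :: "pt \<Rightarrow> pt" where
  "s5 x = (case x of Pt q1 p1 q2 p2 t s a1 a2 a3 a4 a5 a6 \<Rightarrow>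
     let g0 = 1 - a5 - a6; g1 = a6 - a5; g2 = a5 - a2; g3 = a2 - a3; g4 = a3 - a4; g5 = a4
     in mkg q1 p1 q2 (p2 - g5 / q2) t s
            g0 g1 g2 g3 (g4 + 2 * g5) (- g5))"

end

theory Submission imports Defs begin

text \<open>
  On the parameter hyperplane, s0, s1, s4, s5 are literally pi1, pi4, pi6, w3, while s3 is the
  conjugate of pi5 by pi6 and s2 the conjugate of s3 by pi2. Conversely
  w2 = s4 s5 s4, w1 = s3 w2 s3, w4 = s2 w1 s2, w5 = s1 w4 s1, pi2 = s2 s3 s2, pi3 = s1 pi2 s1
  and pi5 = s4 s3 s4. Each of these conjugation identities is a rational identity valid off the
  hypersurface q1 q2 (q1 + q2 - 1) t (t - 1) s (s - 1) (t - s) (q1 s + q2 t - s t) = 0, which is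
  mapped into itself by s2 and s1, the only maps at whose images an identity is reused.
\<close>

definition generic_point :: "pt \<Rightarrow> bool" where
  "generic_point x = (case x of Pt q1 p1 q2 p2 t s a1 a2 a3 a4 a5 a6 \<Rightarrow>
     q1 \<noteq> 0 \<and> q2 \<noteq> 0 \<and> q1 + q2 - 1 \<noteq> 0 \<and> t \<noteq> 0 \<and> t - 1 \<noteq> 0 \<and> s \<noteq> 0 \<and> s - 1 \<noteq> 0
       \<and> t - s \<noteq> 0 \<and> q1 * s + q2 * t - s * t \<noteq> 0)"

lemma generic_point_PtD:
  assumes "generic_point (Pt q1 p1 q2 p2 t s a1 a2 a3 a4 a5 a6)"
  shows "q1 \<noteq> 0" "q2 \<noteq> 0" "q1 + q2 - 1 \<noteq> 0" "t \<noteq> 0" "t - 1 \<noteq> 0" "s \<noteq> 0" "s - 1 \<noteq> 0"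
    "t - s \<noteq> 0" "q1 * s + q2 * t - s * t \<noteq> 0"
  using assms by (simp_all add: generic_point_def)

lemma poly_fun_diff: "poly_fun f \<Longrightarrow> poly_fun g \<Longrightarrow> poly_fun (\<lambda>x. f x - g x)"
  using pf_add[OF _ pf_mult[OF pf_const[of "-1"]], of f g] by simp

lemma rat_eq_if_generic:
  assumes "\<And>x. onM x \<Longrightarrow> generic_point x \<Longrightarrow> f x = g x"
  shows "rat_eq f g"
  unfolding rat_eq_def
proof (intro exI conjI allI impI)
  let ?c = "\<lambda>i x. coords x ! i"
  define P where "P x = ?c 0 x * ?c 2 x * (?c 0 x + ?c 2 x - 1) * ?c 4 x * (?c 4 x - 1)
    * ?c 5 x * (?c 5 x - 1) * (?c 4 x - ?c 5 x) * (?c 0 x * ?c 5 x + ?c 2 x * ?c 4 x - ?c 5 x * ?c 4 x)"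
    for x
  have generic_iff: "generic_point x \<longleftrightarrow> P x \<noteq> 0" for x
    by (cases x) (auto simp: P_def generic_point_def coords_def)
  show "poly_fun P"
    unfolding P_def by (intro pf_mult pf_add poly_fun_diff pf_const pf_coord) simp_all
  show "onM (Pt 2 0 3 0 2 3 (1/2) 0 0 0 0 0)" "P (Pt 2 0 3 0 2 3 (1/2) 0 0 0 0 0) \<noteq> 0"
    by (simp_all add: onM_def P_def coords_def)
  show "f x = g x" if "onM x \<and> P x \<noteq> 0" for x
    using assms that generic_iff by blast
qed

lemma onM_cases [consumes 1, case_names Pt]:
  assumes "onM x"
  obtains q1 p1 q2 p2 t s a2 a3 a4 a5 a6
  where "x = Pt q1 p1 q2 p2 t s ((1 - a2 - a3 - a4 - a5 - a6) / 2) a2 a3 a4 a5 a6"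
  using assms by (cases x) (auto simp: onM_def field_simps)

text \<open>
  s2 and s3 rewritten in the alpha-parameters; on the hyperplane the quantity G of s2 and s3
  becomes A = q1 p1 + q2 p2 + a1.
\<close>

definition s2_alpha :: "pt \<Rightarrow> pt" where
  "s2_alpha x = (case x of Pt q1 p1 q2 p2 t s a1 a2 a3 a4 a5 a6 \<Rightarrow>
     let A = q1 * p1 + q2 * p2 + a1; D = q1 + q2 - 1 in
     Pt (q1 / D) ((p1 - A) * D) (q2 / D) ((p2 - A) * D) (t / (t - 1)) (s / (s - 1))
        a1 a5 a3 a4 a2 a6)"

definition s3_alpha :: "pt \<Rightarrow> pt" where
  "s3_alpha x = (case x of Pt q1 p1 q2 p2 t s a1 a2 a3 a4 a5 a6 \<Rightarrow>
     let A = q1 * p1 + q2 * p2 + a1 in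
     Pt (1 / q1) (- A * q1) (- q2 / q1) (- q1 * p2) (1 / t) (s / t)
        a1 a3 a2 a4 a5 a6)"

lemma s0_eq_pi1: "onM x \<Longrightarrow> s0 x = pi1 x"
proof (induction rule: onM_cases)
  case (Pt q1 p1 q2 p2 t s a2 a3 a4 a5 a6)
  define a1 :: complex where "a1 = (1 - a2 - a3 - a4 - a5 - a6) / 2"
  define A where "A = q1 * p1 + q2 * p2 + a1"
  have EF_eq: "(2 * q1 * p1 + 2 * q2 * p2 + (1 - a5 - a6) - (a2 - a3) - 2 * (a3 - a4) - 3 * a4)
      * (2 * q1 * p1 + 2 * q2 * p2 + (1 - a5 - a6) + (a2 - a3) - a4) = 4 * (A * (A + a2))"
    by (simp add: A_def a1_def field_simps)
  show ?case
    unfolding Pt s0_def pi1_def Let_def pt.case EF_eq a1_def[symmetric] A_def[symmetric]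
    by (simp add: mkg_def Let_def a1_def mult.assoc) (simp add: field_simps)
qed

lemma s1_eq_pi4: "onM x \<Longrightarrow> s1 x = pi4 x"
  by (erule onM_cases) (simp add: s1_def pi4_def mkg_def Let_def field_simps)

lemma s2_eq_s2_alpha: "onM x \<Longrightarrow> s2 x = s2_alpha x"
  by (erule onM_cases) (simp add: s2_def s2_alpha_def mkg_def Let_def field_simps)

lemma s3_eq_s3_alpha: "onM x \<Longrightarrow> s3 x = s3_alpha x"
  by (erule onM_cases) (simp add: s3_def s3_alpha_def mkg_def Let_def field_simps)

lemma s4_eq_pi6: "onM x \<Longrightarrow> s4 x = pi6 x"
  by (erule onM_cases) (simp add: s4_def pi6_def mkg_def Let_def field_simps)

lemma s5_eq_w3: "onM x \<Longrightarrow> s5 x = w3 x"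
  by (erule onM_cases) (simp add: s5_def w3_def mkg_def Let_def field_simps)

lemma onM_preserved:
  assumes "onM x"
  shows "onM (s2_alpha x)" "onM (s3_alpha x)" "onM (w1 x)" "onM (w2 x)" "onM (w3 x)"
    "onM (w4 x)" "onM (pi2 x)" "onM (pi4 x)" "onM (pi6 x)"
  using assms by (cases x; simp add: onM_def s2_alpha_def s3_alpha_def w1_def w2_def w3_def w4_def
      pi2_def pi4_def pi6_def Let_def algebra_simps)+

lemma generic_point_s2_alpha:
  assumes "generic_point x"
  shows "generic_point (s2_alpha x)"
proof (cases x)
  case (Pt q1 p1 q2 p2 t s a1 a2 a3 a4 a5 a6)
  note nz = generic_point_PtD[OF assms[unfolded Pt]]
  define D where "D = q1 + q2 - 1"
  have "D \<noteq> 0" using nz by (simp add: D_def)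
  have "q1 / D + q2 / D - 1 = 1 / D"
    using \<open>D \<noteq> 0\<close> by (simp add: D_def divide_simps)
  moreover have "t / (t - 1) - s / (s - 1) = (s - t) / ((t - 1) * (s - 1))"
    using nz by (simp add: divide_simps) (simp add: algebra_simps)
  moreover have "q1 / D * (s / (s - 1)) + q2 / D * (t / (t - 1)) - s / (s - 1) * (t / (t - 1))
      = - (q1 * s + q2 * t - s * t) / (D * (t - 1) * (s - 1))"
    using nz \<open>D \<noteq> 0\<close> by (simp add: divide_simps) (simp add: D_def algebra_simps)
  ultimately show ?thesis
    unfolding Pt generic_point_def s2_alpha_def Let_def pt.case D_def[symmetric]
    using nz \<open>D \<noteq> 0\<close> by (simp only: divide_eq_0_iff) (simp add: divide_simps)
qed

lemma generic_point_pi4: "generic_point x \<Longrightarrow> generic_point (pi4 x)"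
  by (cases x) (simp add: generic_point_def pi4_def divide_simps algebra_simps)

lemma pi6_w3_pi6: "pi6 (w3 (pi6 x)) = w2 x"
  by (cases x) (simp add: pi6_def w3_def w2_def)

lemma pi6_pi5_pi6: "pi6 (pi5 (pi6 x)) = s3_alpha x"
  by (cases x) (simp add: pi6_def pi5_def s3_alpha_def algebra_simps)

lemma pi6_s3_alpha_pi6: "pi6 (s3_alpha (pi6 x)) = pi5 x"
  by (cases x) (simp add: pi6_def pi5_def s3_alpha_def algebra_simps)

lemma s3_alpha_w2_s3_alpha: "generic_point x \<Longrightarrow> s3_alpha (w2 (s3_alpha x)) = w1 x"
  by (cases x) (simp add: generic_point_def s3_alpha_def w2_def w1_def field_simps)

lemma pi4_w4_pi4: "generic_point x \<Longrightarrow> pi4 (w4 (pi4 x)) = w5 x"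
  by (cases x) (simp add: generic_point_def pi4_def w4_def w5_def field_simps)

lemma pi4_pi2_pi4:
  assumes "generic_point x"
  shows "pi4 (pi2 (pi4 x)) = pi3 x"
proof (cases x)
  case (Pt q1 p1 q2 p2 t s a1 a2 a3 a4 a5 a6)
  note nz = generic_point_PtD[OF assms[unfolded Pt]]
  have pi2_pi4_x: "pi2 (pi4 x) = Pt ((t * s - s * q1 - t * q2) / (t * s)) (- t * p1) (q2 / s)
      (s * p2 - t * p1) ((t - 1) / t) ((t - 1) / (t - s)) a1 a2 a6 a4 a3 a5"
    unfolding Pt pi4_def pi2_def pt.case using nz
    by (simp only: pt.inject, intro conjI; simp add: divide_simps; (simp add: algebra_simps)?)
  show ?thesis
    unfolding pi2_pi4_x unfolding Pt pi4_def pi3_def pt.case using nz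
    by (simp only: pt.inject, intro conjI; simp add: divide_simps; (simp add: algebra_simps)?)
qed

text \<open>In the next three proofs D = q1 + q2 - 1 and A = q1 p1 + q2 p2 + a1 are kept as atoms,
  so that the field normalisation does not see the nested denominators of s2_alpha.\<close>

lemma s2_alpha_w1_s2_alpha:
  assumes "generic_point x"
  shows "s2_alpha (w1 (s2_alpha x)) = w4 x"
proof (cases x)
  case (Pt q1 p1 q2 p2 t s a1 a2 a3 a4 a5 a6)
  note nz = generic_point_PtD[OF assms[unfolded Pt]]
  define A where "A = q1 * p1 + q2 * p2 + a1"
  define D where "D = q1 + q2 - 1"
  have "D \<noteq> 0" using nz by (simp add: D_def)
  have w1_s2_x: "w1 (s2_alpha x) = Pt (q1 / D) ((p1 - A) * D) (q2 / D) ((p2 - A) * D)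
      (t / (t - 1)) (s / (s - 1)) (a1 + a5) (- a5) a3 a4 a2 a6"
    by (simp add: Pt s2_alpha_def w1_def A_def D_def Let_def)
  have "q1 / D * ((p1 - A) * D) + q2 / D * ((p2 - A) * D) + (a1 + a5)
      = q1 * (p1 - A) + q2 * (p2 - A) + (a1 + a5)"
    using \<open>D \<noteq> 0\<close> by simp
  also have "\<dots> = - A * D + a5"
    by (simp add: A_def D_def algebra_simps)
  finally have A_w1_s2_x:
    "q1 / D * ((p1 - A) * D) + q2 / D * ((p2 - A) * D) + (a1 + a5) = - A * D + a5" .
  have D_w1_s2_x: "q1 / D + q2 / D - 1 = 1 / D"
    using \<open>D \<noteq> 0\<close> by (simp add: D_def divide_simps)
  have ts_w1_s2_x: "t / (t - 1) / (t / (t - 1) - 1) = t" "s / (s - 1) / (s / (s - 1) - 1) = s"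
    using nz by (simp_all add: divide_simps)
  show ?thesis
    unfolding w1_s2_x
    unfolding s2_alpha_def Let_def pt.case A_w1_s2_x D_w1_s2_x ts_w1_s2_x using nz \<open>D \<noteq> 0\<close>
    by (simp only: pt.inject Pt w4_def pt.case, intro conjI;
        simp add: D_def divide_simps; (simp add: algebra_simps)?)
qed

lemma s2_alpha_s3_alpha_s2_alpha:
  assumes "generic_point x"
  shows "s2_alpha (s3_alpha (s2_alpha x)) = pi2 x"
proof (cases x)
  case (Pt q1 p1 q2 p2 t s a1 a2 a3 a4 a5 a6)
  note nz = generic_point_PtD[OF assms[unfolded Pt]]
  define A where "A = q1 * p1 + q2 * p2 + a1"
  define D where "D = q1 + q2 - 1"
  have "D \<noteq> 0" using nz by (simp add: D_def)
  have s2_x: "s2_alpha x = Pt (q1 / D) ((p1 - A) * D) (q2 / D) ((p2 - A) * D)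
      (t / (t - 1)) (s / (s - 1)) a1 a5 a3 a4 a2 a6"
    by (simp add: Pt s2_alpha_def A_def D_def Let_def)
  have "q1 / D * ((p1 - A) * D) + q2 / D * ((p2 - A) * D) + a1
      = q1 * (p1 - A) + q2 * (p2 - A) + a1"
    using \<open>D \<noteq> 0\<close> by simp
  also have "\<dots> = - A * D"
    by (simp add: A_def D_def algebra_simps)
  finally have A_s2_x: "q1 / D * ((p1 - A) * D) + q2 / D * ((p2 - A) * D) + a1 = - A * D" .
  have s3_s2_x: "s3_alpha (Pt (q1 / D) ((p1 - A) * D) (q2 / D) ((p2 - A) * D)
      (t / (t - 1)) (s / (s - 1)) a1 a5 a3 a4 a2 a6)
    = Pt (D / q1) (A * q1) (- q2 / q1) (- q1 * (p2 - A)) ((t - 1) / t) (s * (t - 1) / ((s - 1) * t))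
      a1 a3 a5 a4 a2 a6"
    unfolding s3_alpha_def Let_def pt.case A_s2_x using nz \<open>D \<noteq> 0\<close> by (simp add: field_simps)
  have A_s3_s2_x: "D / q1 * (A * q1) + (- q2 / q1) * (- q1 * (p2 - A)) + a1 = q1 * (A - p1)"
    using nz by (simp add: A_def D_def field_simps)
  have D_s3_s2_x: "D / q1 + (- q2 / q1) - 1 = - 1 / q1"
    using nz by (simp add: D_def field_simps)
  have s_s3_s2_x:
    "s * (t - 1) / ((s - 1) * t) / (s * (t - 1) / ((s - 1) * t) - 1) = (t - 1) * s / (t - s)"
    using nz by (simp add: divide_simps, (simp add: algebra_simps)?)
  have s2_s3_s2_x: "s2_alpha (Pt (D / q1) (A * q1) (- q2 / q1) (- q1 * (p2 - A)) ((t - 1) / t)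
      (s * (t - 1) / ((s - 1) * t)) a1 a3 a5 a4 a2 a6)
    = Pt (1 - q1 - q2) (- p1) q2 (p2 - p1) (1 - t) ((t - 1) * s / (t - s)) a1 a2 a5 a4 a3 a6"
    unfolding s2_alpha_def Let_def pt.case A_s3_s2_x D_s3_s2_x s_s3_s2_x using nz
    by (simp only: pt.inject, intro conjI; simp add: D_def divide_simps; (simp add: algebra_simps)?)
  show ?thesis
    unfolding s2_x s3_s2_x s2_s3_s2_x by (simp add: Pt pi2_def)
qed

lemma pi2_s3_alpha_pi2:
  assumes "generic_point x"
  shows "pi2 (s3_alpha (pi2 x)) = s2_alpha x"
proof (cases x)
  case (Pt q1 p1 q2 p2 t s a1 a2 a3 a4 a5 a6)
  note nz = generic_point_PtD[OF assms[unfolded Pt]]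
  define A where "A = q1 * p1 + q2 * p2 + a1"
  define D where "D = q1 + q2 - 1"
  have "D \<noteq> 0" using nz by (simp add: D_def)
  have pi2_x: "pi2 x = Pt (- D) (- p1) q2 (p2 - p1) (1 - t) ((t - 1) * s / (t - s)) a1 a2 a5 a4 a3 a6"
    by (simp add: Pt pi2_def D_def)
  have A_pi2_x: "- D * - p1 + q2 * (p2 - p1) + a1 = A - p1"
    by (simp add: A_def D_def algebra_simps)
  have s3_pi2_x:
    "s3_alpha (Pt (- D) (- p1) q2 (p2 - p1) (1 - t) ((t - 1) * s / (t - s)) a1 a2 a5 a4 a3 a6)
    = Pt (- 1 / D) ((A - p1) * D) (q2 / D) (D * (p2 - p1)) (1 / (1 - t)) (s / (s - t))
      a1 a5 a2 a4 a3 a6"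
    unfolding s3_alpha_def Let_def pt.case A_pi2_x using nz \<open>D \<noteq> 0\<close>
    by (simp only: pt.inject, intro conjI; simp add: divide_simps; (simp add: algebra_simps)?)
  have t_s3_pi2_x: "1 / (1 - t) - s / (s - t) = t * (s - 1) / ((1 - t) * (s - t))"
    using nz by (simp add: divide_simps, (simp add: algebra_simps)?)
  have pi2_s3_pi2_x: "pi2 (Pt (- 1 / D) ((A - p1) * D) (q2 / D) (D * (p2 - p1)) (1 / (1 - t))
      (s / (s - t)) a1 a5 a2 a4 a3 a6)
    = Pt (q1 / D) ((p1 - A) * D) (q2 / D) ((p2 - A) * D) (t / (t - 1)) (s / (s - 1))
      a1 a5 a3 a4 a2 a6"
    unfolding pi2_def pt.case t_s3_pi2_x using nz \<open>D \<noteq> 0\<close>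
    by (simp only: pt.inject, intro conjI; simp add: D_def divide_simps; (simp add: algebra_simps)?)
  show ?thesis
    unfolding pi2_x s3_pi2_x pi2_s3_pi2_x by (simp add: Pt s2_alpha_def A_def D_def Let_def)
qed

lemmas word_simps = comp_word_def onM_preserved generic_point_s2_alpha generic_point_pi4
  s0_eq_pi1 s1_eq_pi4 s2_eq_s2_alpha s3_eq_s3_alpha s4_eq_pi6 s5_eq_w3
  pi6_w3_pi6 pi6_pi5_pi6 pi6_s3_alpha_pi6 pi2_s3_alpha_pi2 s2_alpha_s3_alpha_s2_alpha
  s3_alpha_w2_s3_alpha s2_alpha_w1_s2_alpha pi4_pi2_pi4 pi4_w4_pi4

lemma s_generators_as_words:
  "rat_eq s0 (comp_word [pi1])"
  "rat_eq s1 (comp_word [pi4])"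
  "rat_eq s2 (comp_word [pi2, pi6, pi5, pi6, pi2])"
  "rat_eq s3 (comp_word [pi6, pi5, pi6])"
  "rat_eq s4 (comp_word [pi6])"
  "rat_eq s5 (comp_word [w3])"
  by (rule rat_eq_if_generic; simp add: word_simps)+

lemma w_pi_generators_as_words:
  "rat_eq w1 (comp_word [s3, s4, s5, s4, s3])"
  "rat_eq w2 (comp_word [s4, s5, s4])"
  "rat_eq w3 (comp_word [s5])"
  "rat_eq w4 (comp_word [s2, s3, s4, s5, s4, s3, s2])"
  "rat_eq w5 (comp_word [s1, s2, s3, s4, s5, s4, s3, s2, s1])"
  "rat_eq pi1 (comp_word [s0])"
  "rat_eq pi2 (comp_word [s2, s3, s2])"
  "rat_eq pi3 (comp_word [s1, s2, s3, s2, s1])"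
  "rat_eq pi4 (comp_word [s1])"
  "rat_eq pi5 (comp_word [s4, s3, s4])"
  "rat_eq pi6 (comp_word [s4])"
  by (rule rat_eq_if_generic; simp add: word_simps)+

theorem mainTheorem10:
  shows "gens_in [s0, s1, s2, s3, s4, s5] [w1, w2, w3, w4, w5, pi1, pi2, pi3, pi4, pi5, pi6]
       \<and> gens_in [w1, w2, w3, w4, w5, pi1, pi2, pi3, pi4, pi5, pi6] [s0, s1, s2, s3, s4, s5]"
  unfolding gens_in_def
  by (simp; intro conjI; rule exI, rule conjI[rotated],
      rule s_generators_as_words w_pi_generators_as_words; simp)

end
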